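(* Let $\mathrm{CNN}_\theta = \mathcal{L}_{l}\circ\cdots\circ\mathcal{L}_{p+1}\circ\mathcal{F}\circ\mathcal{G}_p\circ\cdots\circ\mathcal{G}_1$ be a 1D convolutional neural network as described in the context, and let $\gamma>0$. Suppose that for every layer $i=1,\dots,l$ there exist matrices $Q_i\in\mathbb{S}^{n_i}$, $S_i\in\mathbb{R}^{n_i\times n_{i-1}}$, $R_i\in\mathbb{S}^{n_{i-1}}$ such that for all pairs of layer inputs $w_a^{i-1},w_b^{i-1}$ (with corresponding layer outputs $w_a^i,w_b^i$) $$\begin{bmatrix}\underline{w}_a^i-\underline{w}_b^i\\ \underline{w}_a^{i-1}-\underline{w}_b^{i-1}\end{bmatrix}^\top\begin{bmatrix}Q_i & S_i\\ S_i^\top & R_i\end{bmatrix}\begin{bmatrix}\underline{w}_a^i-\underline{w}_b^i\\ \underline{w}_a^{i-1}-\underline{w}_b^{i-1}\end{bmatrix}\ge 0 ,$$ and suppose in addition that the block-tridiagonal matrix $$H=\begin{bmatrix}\gamma^2 I-R_1 & -S_1^\top & 0&\cdots&0\\ -S_1 & -Q_1-R_2 & -S_2^\top & \ddots&\vdots\\ 0& -S_2 & -Q_2-R_3 & \ddots & 0\\ \vdots&\ddots&\ddots&\ddots& -S_l^\top\\ 0&\cdots&0& -S_l & -Q_l-I\end{bmatrix}$$ is positive semidefinite. Then $\|\mathrm{CNN}_\theta(w_a^0)-\mathrm{CNN}_\theta(w_b^0)\|_2\le\gamma\|w_a^0-w_b^0\|_2$ for all inputs $w_a^0,w_b^0$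.
   Context: $\mathbb{S}^n$ denotes the real symmetric $n\times n$ matrices. The network consists of $l$ layers. Layers $\mathcal{G}_i$, $i=1,\dots,p$, map $\mathbb{R}^{c_{i-1}\times N_{i-1}}\to\mathbb{R}^{c_i\times N_i}$ and are each either a convolutional layer or a pooling layer; for a signal $w^i\in\mathbb{R}^{c_i\times N_i}$, $w^i_k\in\mathbb{R}^{c_i}$ denotes its $k$-th column (time step). A convolutional layer is $w_k^i=\phi_i\big(b_i+\sum_{j=0}^{\ell_i-1}K^i_j w^{i-1}_{k-j}\big)$ with kernels $K^i_j\in\mathbb{R}^{c_i\times c_{i-1}}$, bias $b_i\in\mathbb{R}^{c_i}$, zero padding ($w^{i-1}_m=0$ for indices before the start of the signal) and an element-wise activation $\phi_i$; a pooling layer is channel-wise average or maximum pooling over non-overlapping windows of length $\ell_i$ (kernel size = stride = $\ell_i$, $N_i=N_{i-1}/\ell_i$, $c_i=c_{i-1}$). $\mathcal{F}:\mathbb{R}^{c_p\times N_p}\to\mathbb{R}^{n_p}$, $n_p=c_pN_p$, is flattening (column-wise stacking). Layers $\mathcal{L}_i$, $i=p+1,\dots,l$, are fully connected: $w^i=\phi_i(W_iw^{i-1}+b_i)$ for $i<l$ and $w^l=W_lw^{l-1}+b_l$, with $W_i\in\mathbb{R}^{n_i\times n_{i-1}}$, $b_i\in\mathbb{R}^{n_i}$. For $i\le p$, $n_i:=c_iN_i$. For a signal $w^i$, $\underline{w}^i\in\mathbb{R}^{n_i}$ denotes its column-wise stacked vector if $w^i\in\mathbb{R}^{c_i\times N_i}$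 and $\underline{w}^i=w^i$ if $w^i\in\mathbb{R}^{n_i}$. The input is $w^0\in\mathbb{R}^{c_0\times N_0}$ and the norm $\|\cdot\|_2$ on matrices is the Euclidean norm of the stacked vector. *)

theory Defs
  imports "Jordan_Normal_Form.Matrix"
begin

definition vnorm :: "real vec \<Rightarrow> real" where
  "vnorm v = sqrt (v \<bullet> v)"

text \<open>Column-wise stacking of a signal w in R^(c x N) (rows = channels, columns = time steps):
  entry (ch, k) goes to position k * c + ch.\<close>
definition stack :: "real mat \<Rightarrow> real vec" where
  "stack w = vec (dim_row w * dim_col w) (\<lambda>j. w $$ (j mod dim_row w, j div dim_row w))"

definition unstack :: "nat \<Rightarrow> nat \<Rightarrow> real vec \<Rightarrow> real mat" where
  "unstack c N x = mat c N (\<lambda>(ch, k). x $ (k * c + ch))"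

definition mnorm :: "real mat \<Rightarrow> real" where
  "mnorm w = vnorm (stack w)"

definition psd :: "real mat \<Rightarrow> bool" where
  "psd M \<longleftrightarrow> dim_row M = dim_col M \<and> (\<forall>x \<in> carrier_vec (dim_row M). 0 \<le> x \<bullet> (M *\<^sub>v x))"

datatype layer_kind = Conv | AvgPool | MaxPool

record cnn =
  p :: nat                          \<comment> \<open>number of conv/pool layers\<close>
  l :: nat                          \<comment> \<open>total number of layers\<close>
  ch :: "nat \<Rightarrow> nat"
  len :: "nat \<Rightarrow> nat"
  dim :: "nat \<Rightarrow> nat"
  kind :: "nat \<Rightarrow> layer_kind"
  ker_len :: "nat \<Rightarrow> nat"           \<comment> \<open>l_i : kernel length / pooling window\<close>
  ker :: "nat \<Rightarrow> nat \<Rightarrow> real mat"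
  bias :: "nat \<Rightarrow> real vec"
  act :: "nat \<Rightarrow> real \<Rightarrow> real"
  weight :: "nat \<Rightarrow> real mat"

definition wf_cnn :: "cnn \<Rightarrow> bool" where
  "wf_cnn C \<longleftrightarrow> p C < l C
   \<and> (\<forall>i \<le> p C. dim C i = ch C i * len C i)
   \<and> (\<forall>i \<in> {1..p C}.
        (kind C i = Conv \<longrightarrow> 1 \<le> ker_len C i \<and> len C i = len C (i - 1)
             \<and> (\<forall>j < ker_len C i. ker C i j \<in> carrier_mat (ch C i) (ch C (i - 1)))
             \<and> bias C i \<in> carrier_vec (ch C i))
      \<and> (kind C i \<noteq> Conv \<longrightarrow> 1 \<le> ker_len C i \<and> ch C i = ch C (i - 1)
             \<and> len C (i - 1) = ker_len C i * len C i))
   \<and> (\<forall>i \<in> {p C + 1..l C}. weight C i \<in> carrier_mat (dim C i) (dim C (i - 1))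
             \<and> bias C i \<in> carrier_vec (dim C i))"

text \<open>Convolutional layer (0-based time index k; zero padding before the start):
  w^i_k = phi_i (b_i + sum_{j < l_i} K^i_j w^{i-1}_{k-j}).\<close>
definition conv_layer :: "cnn \<Rightarrow> nat \<Rightarrow> real mat \<Rightarrow> real mat" where
  "conv_layer C i w = mat (ch C i) (len C i) (\<lambda>(r, k).
     act C i (bias C i $ r + (\<Sum>j < ker_len C i. if j \<le> k then
        (\<Sum>d < ch C (i - 1). ker C i j $$ (r, d) * w $$ (d, k - j)) else 0)))"

definition avgpool_layer :: "cnn \<Rightarrow> nat \<Rightarrow> real mat \<Rightarrow> real mat" where
  "avgpool_layer C i w = mat (ch C i) (len C i) (\<lambda>(r, k).
     (\<Sum>j < ker_len C i. w $$ (r, k * ker_len C i + j)) / real (ker_len C i))"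

definition maxpool_layer :: "cnn \<Rightarrow> nat \<Rightarrow> real mat \<Rightarrow> real mat" where
  "maxpool_layer C i w = mat (ch C i) (len C i) (\<lambda>(r, k).
     Max ((\<lambda>j. w $$ (r, k * ker_len C i + j)) ` {..<ker_len C i}))"

definition G_layer :: "cnn \<Rightarrow> nat \<Rightarrow> real mat \<Rightarrow> real mat" where
  "G_layer C i w = (case kind C i of
       Conv \<Rightarrow> conv_layer C i w
     | AvgPool \<Rightarrow> avgpool_layer C i w
     | MaxPool \<Rightarrow> maxpool_layer C i w)"

text \<open>For i \<le> p this is G_i conjugated by (un)stacking; flattening F is the
  stacking itself, so for i > p the input of L_i is just the vector w^(i-1).\<close>
definition layer_vec :: "cnn \<Rightarrow> nat \<Rightarrow> real vec \<Rightarrow> real vec" where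
  "layer_vec C i x =
     (if i \<le> p C then stack (G_layer C i (unstack (ch C (i - 1)) (len C (i - 1)) x))
      else if i < l C then map_vec (act C i) (weight C i *\<^sub>v x + bias C i)
      else weight C i *\<^sub>v x + bias C i)"

fun net_upto :: "cnn \<Rightarrow> nat \<Rightarrow> real vec \<Rightarrow> real vec" where
  "net_upto C 0 x = x"
| "net_upto C (Suc i) x = layer_vec C (Suc i) (net_upto C i x)"

definition CNN :: "cnn \<Rightarrow> real mat \<Rightarrow> real vec" where
  "CNN C w0 = net_upto C (l C) (stack w0)"

definition blk_off :: "(nat \<Rightarrow> nat) \<Rightarrow> nat \<Rightarrow> nat" where
  "blk_off n i = (\<Sum>j < i. n j)"

definition blk_idx :: "(nat \<Rightarrow> nat) \<Rightarrow> nat \<Rightarrow> nat" where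
  "blk_idx n r = (LEAST i. r < blk_off n (Suc i))"

definition block_mat :: "(nat \<Rightarrow> nat) \<Rightarrow> nat \<Rightarrow> (nat \<Rightarrow> nat \<Rightarrow> real mat) \<Rightarrow> real mat" where
  "block_mat n m B = mat (blk_off n (Suc m)) (blk_off n (Suc m)) (\<lambda>(r, s).
     B (blk_idx n r) (blk_idx n s) $$ (r - blk_off n (blk_idx n r), s - blk_off n (blk_idx n s)))"

definition H_blocks :: "(nat \<Rightarrow> nat) \<Rightarrow> nat \<Rightarrow> real \<Rightarrow> (nat \<Rightarrow> real mat) \<Rightarrow> (nat \<Rightarrow> real mat)
     \<Rightarrow> (nat \<Rightarrow> real mat) \<Rightarrow> nat \<Rightarrow> nat \<Rightarrow> real mat" where
  "H_blocks n L \<gamma> Q S R i j =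
     (if i = j then
        (if i = 0 then \<gamma>\<^sup>2 \<cdot>\<^sub>m 1\<^sub>m (n 0) - R 1
         else if i = L then - Q L - 1\<^sub>m (n L)
         else - Q i - R (i + 1))
      else if i = j + 1 then - S i
      else if j = i + 1 then - transpose_mat (S j)
      else 0\<^sub>m (n i) (n j))"

definition H_mat :: "(nat \<Rightarrow> nat) \<Rightarrow> nat \<Rightarrow> real \<Rightarrow> (nat \<Rightarrow> real mat) \<Rightarrow> (nat \<Rightarrow> real mat)
     \<Rightarrow> (nat \<Rightarrow> real mat) \<Rightarrow> real mat" where
  "H_mat n L \<gamma> Q S R = block_mat n L (H_blocks n L \<gamma> Q S R)"

end

(*
  Let d i be the difference of the two stacked signals after layer i and stack d 0, ..., d l
  into one vector. Since H is block tridiagonal, its quadratic form at this vector telescopes to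
  gamma^2 |d 0|^2 - |d l|^2 minus the sum over the layers of the quadratic constraints evaluated
  at (d i, d (i - 1)). Those are nonnegative by hypothesis, so positive semidefiniteness of H
  yields |d l|^2 <= gamma^2 |d 0|^2.
*)
theory Submission
  imports Defs
begin

lemma scalar_prod_mult_mat_vec_sum:
  assumes "x \<in> carrier_vec m" "A \<in> carrier_mat m n" "y \<in> carrier_vec n"
  shows "x \<bullet> (A *\<^sub>v y) = (\<Sum>a<m. \<Sum>b<n. x $ a * A $$ (a, b) * y $ b)"
  using assms unfolding scalar_prod_def mult_mat_vec_def
  by (simp add: atLeast0LessThan row_def sum_distrib_left mult.assoc)

lemma four_block_mat_quadratic_form:
  fixes Q S R :: "'a :: comm_ring_1 mat"
  assumes u: "u \<in> carrier_vec n1" and w: "w \<in> carrier_vec n2"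
    and Q: "Q \<in> carrier_mat n1 n1" and S: "S \<in> carrier_mat n1 n2" and R: "R \<in> carrier_mat n2 n2"
  shows "(u @\<^sub>v w) \<bullet> (four_block_mat Q S (transpose_mat S) R *\<^sub>v (u @\<^sub>v w))
    = u \<bullet> (Q *\<^sub>v u) + 2 * (u \<bullet> (S *\<^sub>v w)) + w \<bullet> (R *\<^sub>v w)"
proof -
  have ST: "w \<bullet> (transpose_mat S *\<^sub>v u) = u \<bullet> (S *\<^sub>v w)"
    using transpose_vec_mult_scalar[OF S w u] comm_scalar_prod[of w n2 "transpose_mat S *\<^sub>v u"] S u w
    by auto
  have "(u @\<^sub>v w) \<bullet> (four_block_mat Q S (transpose_mat S) R *\<^sub>v (u @\<^sub>v w))
      = u \<bullet> (Q *\<^sub>v u + S *\<^sub>v w) + w \<bullet> (transpose_mat S *\<^sub>v u + R *\<^sub>v w)"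
    using assms by (simp add: four_block_mat_mult_vec[OF Q S _ R u w] scalar_prod_append[of _ n1 _ n2])
  also have "\<dots> = u \<bullet> (Q *\<^sub>v u) + u \<bullet> (S *\<^sub>v w) + (w \<bullet> (transpose_mat S *\<^sub>v u) + w \<bullet> (R *\<^sub>v w))"
    using assms by (simp add: scalar_prod_add_distrib[of _ n1] scalar_prod_add_distrib[of _ n2])
  finally show ?thesis unfolding ST by simp
qed

lemma blk_off_0 [simp]: "blk_off n 0 = 0"
  by (simp add: blk_off_def)

lemma blk_off_Suc: "blk_off n (Suc i) = blk_off n i + n i"
  by (simp add: blk_off_def)

lemma blk_off_mono: "i \<le> j \<Longrightarrow> blk_off n i \<le> blk_off n j"
  unfolding blk_off_def by (rule sum_mono2) auto

lemma blk_off_add_less: "i \<le> m \<Longrightarrow> a < n i \<Longrightarrow> blk_off n i + a < blk_off n (Suc m)"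
  using blk_off_mono[of "Suc i" "Suc m" n] by (simp add: blk_off_Suc)

lemma blk_idx_blk_off_add [simp]:
  assumes "a < n i"
  shows "blk_idx n (blk_off n i + a) = i"
  unfolding blk_idx_def
proof (rule Least_equality)
  show "blk_off n i + a < blk_off n (Suc i)" using assms by (simp add: blk_off_Suc)
next
  fix j assume "blk_off n i + a < blk_off n (Suc j)"
  then show "i \<le> j" using blk_off_mono[of "Suc j" i n] by (cases "i \<le> j") auto
qed

lemma sum_lessThan_add:
  fixes a b :: nat
  shows "(\<Sum>r<a + b. f r) = (\<Sum>r<a. f r) + (\<Sum>r<b. f (a + r))"
  by (induction b) (simp_all add: add.assoc)

lemma sum_lessThan_blk_off:
  "(\<Sum>r<blk_off n (Suc m). f r) = (\<Sum>i\<le>m. \<Sum>a<n i. f (blk_off n i + a))"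
proof (induction m)
  case (Suc m)
  then show ?case by (simp add: blk_off_Suc[of n "Suc m"] sum_lessThan_add)
qed (simp add: blk_off_Suc)

definition block_vec :: "(nat \<Rightarrow> nat) \<Rightarrow> nat \<Rightarrow> (nat \<Rightarrow> 'a vec) \<Rightarrow> 'a vec" where
  "block_vec n m d = vec (blk_off n (Suc m)) (\<lambda>r. d (blk_idx n r) $ (r - blk_off n (blk_idx n r)))"

lemma block_vec_carrier [simp]: "block_vec n m d \<in> carrier_vec (blk_off n (Suc m))"
  by (simp add: block_vec_def)

lemma block_vec_index:
  "i \<le> m \<Longrightarrow> a < n i \<Longrightarrow> block_vec n m d $ (blk_off n i + a) = d i $ a"
  by (simp add: block_vec_def blk_off_add_less)

lemma block_mat_carrier [simp]:
  "block_mat n m B \<in> carrier_mat (blk_off n (Suc m)) (blk_off n (Suc m))"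
  by (simp add: block_mat_def)

lemma block_mat_index:
  "i \<le> m \<Longrightarrow> a < n i \<Longrightarrow> j \<le> m \<Longrightarrow> b < n j \<Longrightarrow>
    block_mat n m B $$ (blk_off n i + a, blk_off n j + b) = B i j $$ (a, b)"
  by (simp add: block_mat_def blk_off_add_less)

lemma block_mat_quadratic_form:
  fixes B :: "nat \<Rightarrow> nat \<Rightarrow> real mat"
  assumes d: "\<And>i. i \<le> m \<Longrightarrow> d i \<in> carrier_vec (n i)"
    and B: "\<And>i j. i \<le> m \<Longrightarrow> j \<le> m \<Longrightarrow> B i j \<in> carrier_mat (n i) (n j)"
  shows "block_vec n m d \<bullet> (block_mat n m B *\<^sub>v block_vec n m d)
    = (\<Sum>i\<le>m. \<Sum>j\<le>m. d i \<bullet> (B i j *\<^sub>v d j))"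
proof -
  let ?v = "block_vec n m d"
  have "?v \<bullet> (block_mat n m B *\<^sub>v ?v) = (\<Sum>i\<le>m. \<Sum>a<n i. \<Sum>j\<le>m. \<Sum>b<n j.
      ?v $ (blk_off n i + a) * block_mat n m B $$ (blk_off n i + a, blk_off n j + b) * ?v $ (blk_off n j + b))"
    by (simp only: scalar_prod_mult_mat_vec_sum[OF block_vec_carrier block_mat_carrier block_vec_carrier]
        sum_lessThan_blk_off)
  also have "\<dots> = (\<Sum>i\<le>m. \<Sum>a<n i. \<Sum>j\<le>m. \<Sum>b<n j. d i $ a * B i j $$ (a, b) * d j $ b)"
    by (intro sum.cong refl) (simp add: block_vec_index block_mat_index)
  also have "\<dots> = (\<Sum>i\<le>m. \<Sum>j\<le>m. \<Sum>a<n i. \<Sum>b<n j. d i $ a * B i j $$ (a, b) * d j $ b)"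
    by (rule sum.cong[OF refl], rule sum.swap)
  also have "\<dots> = (\<Sum>i\<le>m. \<Sum>j\<le>m. d i \<bullet> (B i j *\<^sub>v d j))"
    using d B by (intro sum.cong refl scalar_prod_mult_mat_vec_sum[symmetric]) auto
  finally show ?thesis .
qed

lemma sum_tridiagonal:
  fixes f :: "nat \<Rightarrow> nat \<Rightarrow> 'a :: comm_monoid_add"
  assumes "\<And>i j. i \<le> L \<Longrightarrow> j \<le> L \<Longrightarrow> i \<noteq> j \<Longrightarrow> i \<noteq> Suc j \<Longrightarrow> j \<noteq> Suc i \<Longrightarrow> f i j = 0"
  shows "(\<Sum>i\<le>L. \<Sum>j\<le>L. f i j) = (\<Sum>i\<le>L. f i i) + (\<Sum>k<L. f (Suc k) k + f k (Suc k))"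
  using assms
proof (induction L)
  case (Suc L)
  have "(\<Sum>i\<le>L. f i (Suc L)) = (\<Sum>i\<le>L. if i = L then f L (Suc L) else 0)"
    using Suc.prems by (intro sum.cong) auto
  moreover have "(\<Sum>j\<le>L. f (Suc L) j) = (\<Sum>j\<le>L. if j = L then f (Suc L) L else 0)"
    using Suc.prems by (intro sum.cong) auto
  ultimately have "(\<Sum>i\<le>L. f i (Suc L)) = f L (Suc L)" "(\<Sum>j\<le>L. f (Suc L) j) = f (Suc L) L"
    by simp_all
  moreover have "(\<Sum>i\<le>L. \<Sum>j\<le>L. f i j) = (\<Sum>i\<le>L. f i i) + (\<Sum>k<L. f (Suc k) k + f k (Suc k))"
    using Suc by simp
  ultimately show ?case by (simp add: sum.distrib ac_simps)
qed simp

lemma sum_atMost_boundary_terms: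
  fixes a b q r :: "nat \<Rightarrow> 'a :: ab_group_add"
  assumes "0 < L"
  shows "(\<Sum>i\<le>L. (if i = 0 then a i else 0) - (if i = L then b i else 0)
      - (if 0 < i then q i else 0) - (if i < L then r i else 0))
    = a 0 - b L - (\<Sum>k<L. q (Suc k) + r k)"
proof -
  have "(\<Sum>i\<le>L. if 0 < i then q i else 0) = (\<Sum>k<L. q (Suc k))"
    by (simp add: sum.atMost_shift)
  moreover have "(\<Sum>i\<le>L. if i < L then r i else 0) = (\<Sum>k<L. r k)"
    by (simp add: lessThan_Suc_atMost[symmetric])
  ultimately show ?thesis
    using assms by (simp add: sum_subtractf sum.distrib)
qed

locale QSR_dims =
  fixes n :: "nat \<Rightarrow> nat" and L :: nat and Q S R :: "nat \<Rightarrow> real mat"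
  assumes L_pos: "0 < L"
    and Q_carrier: "\<And>k. k \<in> {1..L} \<Longrightarrow> Q k \<in> carrier_mat (n k) (n k)"
    and S_carrier: "\<And>k. k \<in> {1..L} \<Longrightarrow> S k \<in> carrier_mat (n k) (n (k - 1))"
    and R_carrier: "\<And>k. k \<in> {1..L} \<Longrightarrow> R k \<in> carrier_mat (n (k - 1)) (n (k - 1))"
begin

lemma H_blocks_carrier:
  assumes "i \<le> L" "j \<le> L"
  shows "H_blocks n L \<gamma> Q S R i j \<in> carrier_mat (n i) (n j)"
  using assms L_pos Q_carrier[of i] R_carrier[of "Suc i"] S_carrier[of i] S_carrier[of j]
  by (auto simp: H_blocks_def)

lemma H_blocks_off_tridiagonal_form:
  assumes "i \<noteq> j" "i \<noteq> Suc j" "j \<noteq> Suc i" "x \<in> carrier_vec (n i)" "y \<in> carrier_vec (n j)"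
  shows "x \<bullet> (H_blocks n L \<gamma> Q S R i j *\<^sub>v y) = 0"
  using assms by (simp add: H_blocks_def scalar_prod_mult_mat_vec_sum[of x "n i" _ "n j"])

lemma H_blocks_diag_form:
  assumes i: "i \<le> L" and x: "x \<in> carrier_vec (n i)"
  shows "x \<bullet> (H_blocks n L \<gamma> Q S R i i *\<^sub>v x)
    = (if i = 0 then \<gamma>\<^sup>2 * (x \<bullet> x) else 0) - (if i = L then x \<bullet> x else 0)
      - (if 0 < i then x \<bullet> (Q i *\<^sub>v x) else 0) - (if i < L then x \<bullet> (R (Suc i) *\<^sub>v x) else 0)"
proof -
  consider "i = 0" | "i = L" | "0 < i" "i < L"
    using i by linarith
  then show ?thesis
  proof cases
    case 1
    have R1: "R 1 \<in> carrier_mat (n 0) (n 0)"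
      using L_pos R_carrier[of 1] by simp
    have "(\<gamma>\<^sup>2 \<cdot>\<^sub>m 1\<^sub>m (n 0) - R 1) *\<^sub>v x = \<gamma>\<^sup>2 \<cdot>\<^sub>v x - R 1 *\<^sub>v x"
      using R1 x 1 by (subst minus_mult_distrib_mat_vec[of _ "n 0" "n 0"]) auto
    with 1 L_pos R1 x show ?thesis
      by (simp add: H_blocks_def scalar_prod_minus_distrib[of _ "n 0"])
  next
    case 2
    with L_pos Q_carrier[of L] x show ?thesis
      by (simp add: H_blocks_def minus_mult_distrib_mat_vec scalar_prod_minus_distrib[of _ "n L"])
  next
    case 3
    with Q_carrier[of i] R_carrier[of "Suc i"] x show ?thesis
      by (simp add: H_blocks_def minus_mult_distrib_mat_vec scalar_prod_minus_distrib[of _ "n i"])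
  qed
qed

lemma H_blocks_subdiag_form:
  assumes "k < L" "x \<in> carrier_vec (n (Suc k))" "y \<in> carrier_vec (n k)"
  shows "x \<bullet> (H_blocks n L \<gamma> Q S R (Suc k) k *\<^sub>v y) = - (x \<bullet> (S (Suc k) *\<^sub>v y))"
  using assms S_carrier[of "Suc k"] by (simp add: H_blocks_def)

lemma H_blocks_superdiag_form:
  assumes "k < L" "x \<in> carrier_vec (n (Suc k))" "y \<in> carrier_vec (n k)"
  shows "y \<bullet> (H_blocks n L \<gamma> Q S R k (Suc k) *\<^sub>v x) = - (x \<bullet> (S (Suc k) *\<^sub>v y))"
  using assms S_carrier[of "Suc k"] transpose_vec_mult_scalar[of "S (Suc k)"]
  by (simp add: H_blocks_def comm_scalar_prod[of y "n k"])

lemma H_mat_quadratic_form: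
  assumes d: "\<And>i. i \<le> L \<Longrightarrow> d i \<in> carrier_vec (n i)"
  shows "block_vec n L d \<bullet> (H_mat n L \<gamma> Q S R *\<^sub>v block_vec n L d)
    = \<gamma>\<^sup>2 * (d 0 \<bullet> d 0) - d L \<bullet> d L
      - (\<Sum>k<L. d (Suc k) \<bullet> (Q (Suc k) *\<^sub>v d (Suc k)) + 2 * (d (Suc k) \<bullet> (S (Suc k) *\<^sub>v d k))
               + d k \<bullet> (R (Suc k) *\<^sub>v d k))"
proof -
  let ?H = "H_blocks n L \<gamma> Q S R"
  have "block_vec n L d \<bullet> (H_mat n L \<gamma> Q S R *\<^sub>v block_vec n L d) = (\<Sum>i\<le>L. \<Sum>j\<le>L. d i \<bullet> (?H i j *\<^sub>v d j))"
    unfolding H_mat_def using d H_blocks_carrier by (rule block_mat_quadratic_form)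
  also have "\<dots> = (\<Sum>i\<le>L. d i \<bullet> (?H i i *\<^sub>v d i))
      + (\<Sum>k<L. d (Suc k) \<bullet> (?H (Suc k) k *\<^sub>v d k) + d k \<bullet> (?H k (Suc k) *\<^sub>v d (Suc k)))"
    using d by (intro sum_tridiagonal H_blocks_off_tridiagonal_form) auto
  also have "\<dots> = \<gamma>\<^sup>2 * (d 0 \<bullet> d 0) - d L \<bullet> d L
      - (\<Sum>k<L. d (Suc k) \<bullet> (Q (Suc k) *\<^sub>v d (Suc k)) + d k \<bullet> (R (Suc k) *\<^sub>v d k))
      - (\<Sum>k<L. 2 * (d (Suc k) \<bullet> (S (Suc k) *\<^sub>v d k)))"
    using d L_pos
    by (simp add: H_blocks_diag_form H_blocks_subdiag_form H_blocks_superdiag_form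
        sum_atMost_boundary_terms sum_negf)
  finally show ?thesis
    by (simp add: sum.distrib algebra_simps)
qed

lemma H_mat_psd_gain_bound:
  assumes H_psd: "psd (H_mat n L \<gamma> Q S R)"
    and d: "\<And>i. i \<le> L \<Longrightarrow> d i \<in> carrier_vec (n i)"
    and layer: "\<And>k. k < L \<Longrightarrow> 0 \<le> (d (Suc k) @\<^sub>v d k) \<bullet>
      (four_block_mat (Q (Suc k)) (S (Suc k)) (transpose_mat (S (Suc k))) (R (Suc k)) *\<^sub>v (d (Suc k) @\<^sub>v d k))"
  shows "d L \<bullet> d L \<le> \<gamma>\<^sup>2 * (d 0 \<bullet> d 0)"
proof -
  let ?layer = "\<lambda>k. d (Suc k) \<bullet> (Q (Suc k) *\<^sub>v d (Suc k)) + 2 * (d (Suc k) \<bullet> (S (Suc k) *\<^sub>v d k))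
    + d k \<bullet> (R (Suc k) *\<^sub>v d k)"
  have "0 \<le> ?layer k" if "k < L" for k
    using layer[OF that] four_block_mat_quadratic_form[OF d d Q_carrier S_carrier R_carrier, of "Suc k"] that
    by simp
  then have "0 \<le> (\<Sum>k<L. ?layer k)"
    by (intro sum_nonneg) simp
  moreover have "0 \<le> block_vec n L d \<bullet> (H_mat n L \<gamma> Q S R *\<^sub>v block_vec n L d)"
    using H_psd block_vec_carrier carrier_matD(1)[OF block_mat_carrier] unfolding psd_def H_mat_def by metis
  moreover have "\<dots> = \<gamma>\<^sup>2 * (d 0 \<bullet> d 0) - d L \<bullet> d L - (\<Sum>k<L. ?layer k)"
    using d by (rule H_mat_quadratic_form)
  ultimately show ?thesis
    by linarith
qed

end

lemma vnorm_le_scaled: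
  assumes "x \<bullet> x \<le> \<gamma>\<^sup>2 * (y \<bullet> y)" "0 \<le> \<gamma>"
  shows "vnorm x \<le> \<gamma> * vnorm y"
proof -
  have "sqrt (x \<bullet> x) \<le> sqrt (\<gamma>\<^sup>2 * (y \<bullet> y))"
    using assms(1) by (rule real_sqrt_le_mono)
  then show ?thesis
    using assms(2) by (simp add: vnorm_def real_sqrt_mult)
qed

lemma stack_carrier: "w \<in> carrier_mat c N \<Longrightarrow> stack w \<in> carrier_vec (c * N)"
  unfolding stack_def carrier_mat_def carrier_vec_def by simp

lemma stack_diff:
  assumes "wa \<in> carrier_mat c N" "wb \<in> carrier_mat c N"
  shows "stack (wa - wb) = stack wa - stack wb"
proof (rule eq_vecI)
  fix j assume "j < dim_vec (stack wa - stack wb)"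
  then have "j < c * N"
    using assms by (simp add: stack_def)
  moreover from this have "0 < c"
    by (cases c) auto
  ultimately have "j mod c < c" "j div c < N"
    by (simp_all add: div_less_iff_less_mult mult.commute)
  then show "stack (wa - wb) $ j = (stack wa - stack wb) $ j"
    using assms \<open>j < c * N\<close> by (simp add: stack_def)
qed (use assms in \<open>simp add: stack_def\<close>)

lemma G_layer_carrier: "G_layer C i y \<in> carrier_mat (ch C i) (len C i)"
  unfolding G_layer_def conv_layer_def avgpool_layer_def maxpool_layer_def
  by (cases "kind C i") (simp_all only: layer_kind.case mat_carrier)

lemma layer_vec_carrier:
  assumes wf: "wf_cnn C" and i: "i \<in> {1..l C}"
  shows "layer_vec C i x \<in> carrier_vec (dim C i)"
proof (cases "i \<le> p C")
  case True
  have "dim C i = ch C i * len C i"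
    using wf True unfolding wf_cnn_def by blast
  moreover have "layer_vec C i x \<in> carrier_vec (ch C i * len C i)"
    using True stack_carrier[OF G_layer_carrier] by (simp add: layer_vec_def)
  ultimately show ?thesis
    by simp
next
  case False
  with i have "i \<in> {p C + 1..l C}"
    by simp
  then have "weight C i \<in> carrier_mat (dim C i) (dim C (i - 1))" "bias C i \<in> carrier_vec (dim C i)"
    using wf unfolding wf_cnn_def by blast+
  with False show ?thesis
    unfolding layer_vec_def carrier_vec_def carrier_mat_def by simp
qed

lemma net_upto_carrier:
  assumes "wf_cnn C" "x \<in> carrier_vec (dim C 0)" "i \<le> l C"
  shows "net_upto C i x \<in> carrier_vec (dim C i)"
  using assms(3) by (induction i) (simp_all add: assms(2) layer_vec_carrier[OF assms(1)])

theorem theorem1: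
  fixes C :: cnn and \<gamma> :: real
    and Q S R :: "nat \<Rightarrow> real mat"
  assumes wf: "wf_cnn C"
    and gamma_pos: "\<gamma> > 0"
    and Q_sym: "\<forall>i \<in> {1..l C}. Q i \<in> carrier_mat (dim C i) (dim C i) \<and> transpose_mat (Q i) = Q i"
    and S_dim: "\<forall>i \<in> {1..l C}. S i \<in> carrier_mat (dim C i) (dim C (i - 1))"
    and R_sym: "\<forall>i \<in> {1..l C}. R i \<in> carrier_mat (dim C (i - 1)) (dim C (i - 1)) \<and> transpose_mat (R i) = R i"
    and QC: "\<forall>i \<in> {1..l C}. \<forall>xa \<in> carrier_vec (dim C (i - 1)). \<forall>xb \<in> carrier_vec (dim C (i - 1)).
              0 \<le> ((layer_vec C i xa - layer_vec C i xb) @\<^sub>v (xa - xb)) \<bullet>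
                   (four_block_mat (Q i) (S i) (transpose_mat (S i)) (R i)
                      *\<^sub>v ((layer_vec C i xa - layer_vec C i xb) @\<^sub>v (xa - xb)))"
    and H_psd: "psd (H_mat (dim C) (l C) \<gamma> Q S R)"
  shows "\<forall>wa \<in> carrier_mat (ch C 0) (len C 0). \<forall>wb \<in> carrier_mat (ch C 0) (len C 0).
           vnorm (CNN C wa - CNN C wb) \<le> \<gamma> * mnorm (wa - wb)"
proof (intro ballI)
  fix wa wb :: "real mat"
  assume wa: "wa \<in> carrier_mat (ch C 0) (len C 0)" and wb: "wb \<in> carrier_mat (ch C 0) (len C 0)"
  interpret QSR_dims "dim C" "l C" Q S R
    using wf Q_sym S_dim R_sym by unfold_locales (auto simp: wf_cnn_def)
  have "dim C 0 = ch C 0 * len C 0"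
    using wf unfolding wf_cnn_def by blast
  then have inputs: "stack wa \<in> carrier_vec (dim C 0)" "stack wb \<in> carrier_vec (dim C 0)"
    using stack_carrier[OF wa] stack_carrier[OF wb] by simp_all
  define d where "d i = net_upto C i (stack wa) - net_upto C i (stack wb)" for i
  have d: "d i \<in> carrier_vec (dim C i)" if "i \<le> l C" for i
    using net_upto_carrier[OF wf inputs(1) that] net_upto_carrier[OF wf inputs(2) that]
    by (simp add: d_def)
  have "d (l C) \<bullet> d (l C) \<le> \<gamma>\<^sup>2 * (d 0 \<bullet> d 0)"
  proof (rule H_mat_psd_gain_bound[OF H_psd d])
    fix k assume "k < l C"
    then show "0 \<le> (d (Suc k) @\<^sub>v d k) \<bullet> (four_block_mat (Q (Suc k)) (S (Suc k))
        (transpose_mat (S (Suc k))) (R (Suc k)) *\<^sub>v (d (Suc k) @\<^sub>v d k))"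
      using QC net_upto_carrier[OF wf inputs(1)] net_upto_carrier[OF wf inputs(2)]
      by (simp add: d_def)
  qed
  moreover have "CNN C wa - CNN C wb = d (l C)" "stack (wa - wb) = d 0"
    by (simp_all add: CNN_def d_def stack_diff[OF wa wb])
  ultimately show "vnorm (CNN C wa - CNN C wb) \<le> \<gamma> * mnorm (wa - wb)"
    using gamma_pos by (simp add: mnorm_def vnorm_le_scaled)
qed

end
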